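(* Let $G=(V,E)$ be a $2$-uniform directed hypergraph with unit edge weights and no loops, containing both undirected edges $\{u,v\}$ (with, say, $T(e)=e$, $H(e)=\emptyset$) and directed edges $(u,v)$ (with $T(e)=\{u\}$, $H(e)=\{v\}$), and such that any unordered pair of distinct nodes is contained in at most one edge. Let $q\in\mathbb R$. Equip $G$ with the directed hypergraph cellular sheaf of stalk dimension $d=1$ and charge $q$ with $\mathcal F_{u\trianglelefteq e}=\mathcal F_{v\trianglelefteq e}=\sqrt2$ for every undirected edge $e=\{u,v\}$ and $\mathcal F_{u\trianglelefteq e}=\mathcal F_{v\trianglelefteq e}=1$ for every directed edge $e=(u,v)$. Then $L^{\vec{\mathcal F}}=L^{(q)}$, the Magnetic Laplacian of $G$. In particular, for $q=\tfrac14$, $L^{\vec{\mathcal F}}$ equals the Sign-Magnetic Laplacian of $G$.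
   Context: A directed hypergraph is $\mathcal H=(V,E)$ with $n=|V|$, $m=|E|$, each hyperedge $e\in E$ a nonempty subset of $V$ partitioned into disjoint sets $T(e)$ (tail) and $H(e)$ (head) with $e=T(e)\cup H(e)$; $\delta_e:=|e|$. A directed hypergraph cellular sheaf with charge $q\in\mathbb R$ and stalk dimension $d$ consists of: for each $e\in E$, $u\in V$, the scalar $\mathcal S^{(q)}_{u\trianglelefteq e}=1$ if $u\in H(e)$, $=e^{-2\pi\mathbf i q}$ if $u\in T(e)$, $=0$ otherwise; for each incidence $u\in e$ a real matrix $\mathcal F_{u\trianglelefteq e}\in\mathbb R^{d\times d}$ and $\vec{\mathcal F}_{u\trianglelefteq e}:=\mathcal S^{(q)}_{u\trianglelefteq e}\mathcal F_{u\trianglelefteq e}$. Let $B^{(q)}\in\mathbb C^{md\times nd}$ have $d\times d$ block $(e,u)$ equal to $\vec{\mathcal F}_{u\trianglelefteq e}$ if $u\in e$ and $0$ otherwise; $D_E=\mathrm{diag}(\delta_1I_d,\dots,\delta_mI_d)$; $D_u:=\sum_{e\ni u}\mathcal F_{u\trianglelefteq e}^\top\mathcal F_{u\trianglelefteq e}$; $D_V=\mathrm{diag}(D_1,\dots,D_n)$; $L^{\vec{\mathcal F}}:=D_V-(B^{(q)})^\dagger D_E^{-1}B^{(q)}$. Magnetic Laplacian: let $A\in\{0,1\}^{n\times n}$ with $A_{uv}=A_{vu}=1$ for each undirected edge $\{u,v\}$, $A_{uv}=1$ for each directed edge $(u,v)$, and $0$ otherwise; $A_s:=\tfrac12(A+A^\top)$;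 $D_s$ diagonal with $(D_s)_{uu}=\sum_v(A_s)_{uv}$; $\Theta^{(q)}:=2\pi q(A-A^\top)$; $H^{(q)}:=A_s\odot\exp(\mathbf i\Theta^{(q)})$ (entrywise product and entrywise exponential); $L^{(q)}:=D_s-H^{(q)}$. For unit-weight graphs of this type the Sign-Magnetic Laplacian coincides with $L^{(1/4)}$. *)

theory Defs
  imports "HOL-Analysis.Analysis"
begin

text \<open>A directed hypergraph on vertex set {0..<n} with m hyperedges indexed by {0..<m};
  hyperedge e has tail T e and head H e (disjoint), e = T e \<union> H e.
  Restriction maps F u e are real d x d matrices given as functions on {0..<d}^2.
  Matrices of size nd x nd are indexed by pairs (vertex, stalk coordinate).\<close>

definition hedge :: "(nat \<Rightarrow> nat set) \<Rightarrow> (nat \<Rightarrow> nat set) \<Rightarrow> nat \<Rightarrow> nat set" where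
  "hedge T H e = T e \<union> H e"

definition charge_S :: "real \<Rightarrow> (nat \<Rightarrow> nat set) \<Rightarrow> (nat \<Rightarrow> nat set) \<Rightarrow> nat \<Rightarrow> nat \<Rightarrow> complex" where
  "charge_S q T H u e =
     (if u \<in> H e then 1 else if u \<in> T e then exp (- 2 * pi * \<i> * of_real q) else 0)"

text \<open>Block (e,u) of B^(q), entry (k,i).\<close>
definition sheaf_B :: "real \<Rightarrow> (nat \<Rightarrow> nat set) \<Rightarrow> (nat \<Rightarrow> nat set)
    \<Rightarrow> (nat \<Rightarrow> nat \<Rightarrow> nat \<Rightarrow> nat \<Rightarrow> real) \<Rightarrow> nat \<times> nat \<Rightarrow> nat \<times> nat \<Rightarrow> complex" where
  "sheaf_B q T H F ek ui =
     (let (e, k) = ek; (u, i) = ui in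
      if u \<in> hedge T H e then charge_S q T H u e * of_real (F u e k i) else 0)"

definition sheaf_DV :: "nat \<Rightarrow> nat \<Rightarrow> (nat \<Rightarrow> nat set) \<Rightarrow> (nat \<Rightarrow> nat set)
    \<Rightarrow> (nat \<Rightarrow> nat \<Rightarrow> nat \<Rightarrow> nat \<Rightarrow> real) \<Rightarrow> nat \<times> nat \<Rightarrow> nat \<times> nat \<Rightarrow> real" where
  "sheaf_DV m d T H F ui vj =
     (let (u, i) = ui; (v, j) = vj in
      if u = v then (\<Sum>e\<in>{e. e < m \<and> u \<in> hedge T H e}. \<Sum>k<d. F u e k i * F u e k j) else 0)"

text \<open>L = D_V - (B^(q))^\<dagger> D_E^{-1} B^(q), with D_E = diag(\<delta>_e I_d).\<close>
definition sheaf_laplacian :: "nat \<Rightarrow> nat \<Rightarrow> real \<Rightarrow> (nat \<Rightarrow> nat set) \<Rightarrow> (nat \<Rightarrow> nat set)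
    \<Rightarrow> (nat \<Rightarrow> nat \<Rightarrow> nat \<Rightarrow> nat \<Rightarrow> real) \<Rightarrow> nat \<times> nat \<Rightarrow> nat \<times> nat \<Rightarrow> complex" where
  "sheaf_laplacian m d q T H F ui vj =
     of_real (sheaf_DV m d T H F ui vj)
     - (\<Sum>e<m. \<Sum>k<d. cnj (sheaf_B q T H F (e, k) ui) * sheaf_B q T H F (e, k) vj
                        / of_nat (card (hedge T H e)))"

datatype gedge = Und nat nat | Dir nat nat

fun gedge_ends :: "gedge \<Rightarrow> nat set" where
  "gedge_ends (Und u v) = {u, v}"
| "gedge_ends (Dir u v) = {u, v}"

fun gedge_tail :: "gedge \<Rightarrow> nat set" where
  "gedge_tail (Und u v) = {u, v}"
| "gedge_tail (Dir u v) = {u}"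

fun gedge_head :: "gedge \<Rightarrow> nat set" where
  "gedge_head (Und u v) = {}"
| "gedge_head (Dir u v) = {v}"

definition adj :: "nat \<Rightarrow> (nat \<Rightarrow> gedge) \<Rightarrow> nat \<Rightarrow> nat \<Rightarrow> real" where
  "adj m es u v =
     (if \<exists>e<m. es e = Und u v \<or> es e = Und v u \<or> es e = Dir u v then 1 else 0)"

definition adj_s :: "nat \<Rightarrow> (nat \<Rightarrow> gedge) \<Rightarrow> nat \<Rightarrow> nat \<Rightarrow> real" where
  "adj_s m es u v = (adj m es u v + adj m es v u) / 2"

definition magnetic_laplacian :: "nat \<Rightarrow> nat \<Rightarrow> (nat \<Rightarrow> gedge) \<Rightarrow> real \<Rightarrow> nat \<Rightarrow> nat \<Rightarrow> complex" where
  "magnetic_laplacian n m es q u v =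
     (if u = v then of_real (\<Sum>w<n. adj_s m es u w) else 0)
     - of_real (adj_s m es u v)
       * exp (\<i> * of_real (2 * pi * q * (adj m es u v - adj m es v u)))"

end

theory Submission
  imports Defs
begin

(* Both Laplacians split into a sum of single-edge Laplacians.  For the sheaf Laplacian this
   holds for every directed hypergraph, since D_V and B^dagger D_E^-1 B are sums over hyperedges.
   For the magnetic Laplacian it needs simplicity: every vertex pair lies in at most one edge, so
   the entries A_uv and A_vu, and with them the phase of H_uv, are those of that single edge.  On an undirected edge both ends are
   tail vertices, so conj(S_u) S_v = 1 and F^2/2 = 1 = A_s(u,v); on a directed edge (u,v) we get
   F^2/2 = 1/2 = A_s(u,v) and conj(S_u) S_v = e^(2 pi i q), the magnetic phase. *)

lemma sum_eq_single:
  assumes "finite A" "a \<in> A" "\<And>x. x \<in> A \<Longrightarrow> x \<noteq> a \<Longrightarrow> f x = 0"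
  shows "sum f A = f a"
  using assms by (simp add: sum.remove sum.neutral)

lemma hedge_single_edge [simp]: "hedge (\<lambda>_. T e) (\<lambda>_. H e) e' = hedge T H e"
  by (simp add: hedge_def)

lemma sheaf_B_single_edge:
  "sheaf_B q (\<lambda>_. T e) (\<lambda>_. H e) (\<lambda>w _. F w e) (e', k) ui = sheaf_B q T H F (e, k) ui"
  by (simp add: sheaf_B_def charge_S_def split: prod.split)

lemma sheaf_DV_eq_sum_edges:
  "sheaf_DV m d T H F (u, i) (v, j)
     = (\<Sum>e<m. if u = v \<and> u \<in> hedge T H e then \<Sum>k<d. F u e k i * F u e k j else 0)"
proof -
  have "{e. e < m \<and> w \<in> hedge T H e} = {..<m} \<inter> {e. w \<in> hedge T H e}" for w by auto
  then show ?thesis by (simp add: sheaf_DV_def sum.If_cases)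
qed

(* With m = 1, the constant maps \<lambda>_. T e, \<lambda>_. H e, \<lambda>w _. F w e describe the sheaf on the
   hypergraph whose only hyperedge is e; likewise \<lambda>_. es e below for graphs. *)
lemma sheaf_laplacian_sum_edges:
  "sheaf_laplacian m d q T H F ui vj
     = (\<Sum>e<m. sheaf_laplacian 1 d q (\<lambda>_. T e) (\<lambda>_. H e) (\<lambda>w _. F w e) ui vj)"
  by (cases ui, cases vj)
    (simp add: sheaf_laplacian_def sheaf_DV_eq_sum_edges sheaf_B_single_edge sum_subtractf)

lemma gedge_ends_if_adjacent:
  "x = Und u v \<or> x = Und v u \<or> x = Dir u v \<Longrightarrow> gedge_ends x = {u, v}"
  by (elim disjE) (simp_all add: insert_commute)

lemma adj_eq_0_if_no_edge:
  assumes "\<And>e. e < m \<Longrightarrow> gedge_ends (es e) \<noteq> {u, v}"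
  shows "adj m es u v = 0"
proof -
  have "\<not> (\<exists>e<m. es e = Und u v \<or> es e = Und v u \<or> es e = Dir u v)"
    using assms gedge_ends_if_adjacent by metis
  then show ?thesis by (simp add: adj_def)
qed

lemma adj_eq_covering_edge:
  assumes simple: "inj_on (\<lambda>e. gedge_ends (es e)) {..<m}"
    and e0: "e0 < m" "gedge_ends (es e0) = {u, v}"
  shows "adj m es u v = adj 1 (\<lambda>_. es e0) u v"
proof -
  have "e = e0" if "e < m" "es e = Und u v \<or> es e = Und v u \<or> es e = Dir u v" for e
    using inj_onD[OF simple _ _ e0(1)[folded lessThan_iff]] gedge_ends_if_adjacent[OF that(2)]
      e0(2) that(1)
    by simp
  with e0(1) have "(\<exists>e<m. es e = Und u v \<or> es e = Und v u \<or> es e = Dir u v)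
      \<longleftrightarrow> es e0 = Und u v \<or> es e0 = Und v u \<or> es e0 = Dir u v"
    by blast
  then show ?thesis by (simp add: adj_def)
qed

lemma adj_pair_fun_eq_sum_edges:
  fixes f :: "real \<Rightarrow> real \<Rightarrow> 'a::comm_monoid_add"
  assumes simple: "inj_on (\<lambda>e. gedge_ends (es e)) {..<m}"
    and f0: "f 0 0 = 0"
  shows "f (adj m es u v) (adj m es v u)
           = (\<Sum>e<m. f (adj 1 (\<lambda>_. es e) u v) (adj 1 (\<lambda>_. es e) v u))"
proof (cases "\<exists>e0<m. gedge_ends (es e0) = {u, v}")
  case True
  then obtain e0 where e0: "e0 < m" "gedge_ends (es e0) = {u, v}" by blast
  then have e0': "gedge_ends (es e0) = {v, u}" by (simp add: insert_commute)
  have others: "f (adj 1 (\<lambda>_. es e) u v) (adj 1 (\<lambda>_. es e) v u) = 0"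
    if "e < m" "e \<noteq> e0" for e
  proof -
    have "gedge_ends (es e) \<noteq> gedge_ends (es e0)"
      using inj_on_contraD[OF simple that(2)] that(1) e0(1) by simp
    then have "adj 1 (\<lambda>_. es e) u v = 0" "adj 1 (\<lambda>_. es e) v u = 0"
      using e0(2) e0' by (simp_all add: adj_eq_0_if_no_edge)
    then show ?thesis using f0 by simp
  qed
  have "f (adj m es u v) (adj m es v u) = f (adj 1 (\<lambda>_. es e0) u v) (adj 1 (\<lambda>_. es e0) v u)"
    using adj_eq_covering_edge[OF simple e0] adj_eq_covering_edge[OF simple e0(1) e0'] by simp
  also have "\<dots> = (\<Sum>e<m. f (adj 1 (\<lambda>_. es e) u v) (adj 1 (\<lambda>_. es e) v u))"
    by (rule sym, rule sum_eq_single) (use e0(1) others in auto)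
  finally show ?thesis .
next
  case False
  have "{v, u} = {u, v}" by (rule insert_commute)
  with False have no_edge: "gedge_ends (es e) \<noteq> {u, v}" "gedge_ends (es e) \<noteq> {v, u}"
    if "e < m" for e
    using that by auto
  have "adj m es u v = 0" "adj m es v u = 0"
    by (rule adj_eq_0_if_no_edge, erule no_edge)+
  moreover have "adj 1 (\<lambda>_. es e) u v = 0" "adj 1 (\<lambda>_. es e) v u = 0" if "e < m" for e
    by (rule adj_eq_0_if_no_edge, simp add: no_edge that)+
  ultimately show ?thesis by (simp add: f0)
qed

lemma magnetic_laplacian_sum_edges:
  assumes simple: "inj_on (\<lambda>e. gedge_ends (es e)) {..<m}"
  shows "magnetic_laplacian n m es q u v = (\<Sum>e<m. magnetic_laplacian n 1 (\<lambda>_. es e) q u v)"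
proof (cases "u = v")
  case True
  have diag: "magnetic_laplacian n m' es' q x x
                = of_real ((\<Sum>w<n. adj_s m' es' x w) - adj_s m' es' x x)" for m' es' x
    by (simp add: magnetic_laplacian_def)
  have adj_s: "adj_s m es x w = (\<Sum>e<m. adj_s 1 (\<lambda>_. es e) x w)" for x w
    unfolding adj_s_def
    by (rule adj_pair_fun_eq_sum_edges[where f="\<lambda>a b. (a + b) / (2::real)", OF simple]) simp
  show ?thesis
    unfolding True diag adj_s by (simp add: sum.swap[of _ "{..<n}"] sum_subtractf)
next
  case False
  have off_diag: "magnetic_laplacian n m' es' q u v
      = - of_real ((adj m' es' u v + adj m' es' v u) / 2)
          * exp (\<i> * of_real (2 * pi * q * (adj m' es' u v - adj m' es' v u)))" for m' es'
    using False by (simp add: magnetic_laplacian_def adj_s_def)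
  show ?thesis
    unfolding off_diag
    by (rule adj_pair_fun_eq_sum_edges[where f="\<lambda>a b. - of_real ((a + b) / 2)
        * exp (\<i> * of_real (2 * pi * q * (a - b)))", OF simple]) simp
qed

lemma gedge_card_2_cases:
  assumes "card (gedge_ends x) = 2"
  obtains a b where "a \<noteq> b" "x = Und a b \<or> x = Dir a b"
  using assms by (cases x) (auto simp: card_insert_if split: if_splits)

lemma adj_single_edge:
  "adj 1 (\<lambda>_. x) u v = (if x = Und u v \<or> x = Und v u \<or> x = Dir u v then 1 else 0)"
  by (simp add: adj_def)

lemma adj_s_degree_single_edge:
  assumes "card (gedge_ends x) = 2" "gedge_ends x \<subseteq> {..<n}"
  shows "(\<Sum>w<n. adj_s 1 (\<lambda>_. x) u w)
           = (if u \<in> gedge_ends x then (case x of Und _ _ \<Rightarrow> 1 | Dir _ _ \<Rightarrow> 1/2) else 0)"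
proof -
  obtain a b where "a \<noteq> b" "x = Und a b \<or> x = Dir a b"
    using assms(1) by (rule gedge_card_2_cases)
  with assms(2) show ?thesis
    unfolding adj_s_def adj_single_edge
    by (auto simp: add_divide_distrib sum.distrib if_distrib[of "\<lambda>x. x / 2"] conj_commute
        cong: if_cong)
qed

lemma sheaf_laplacian_single_edge_eq_magnetic:
  assumes "card (gedge_ends x) = 2" "gedge_ends x \<subseteq> {..<n}"
  shows "sheaf_laplacian 1 1 q (\<lambda>_. gedge_tail x) (\<lambda>_. gedge_head x)
           (\<lambda>w _ k i. case x of Und _ _ \<Rightarrow> sqrt 2 | Dir _ _ \<Rightarrow> 1) (u, 0) (v, 0)
         = magnetic_laplacian n 1 (\<lambda>_. x) q u v"
proof -
  obtain a b where "a \<noteq> b" "x = Und a b \<or> x = Dir a b"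
    using assms(1) by (rule gedge_card_2_cases)
  then show ?thesis
    unfolding magnetic_laplacian_def adj_s_degree_single_edge[OF assms] adj_s_def adj_single_edge
    by (elim disjE) (simp_all add: sheaf_laplacian_def sheaf_DV_eq_sum_edges sheaf_B_def
        charge_S_def hedge_def exp_cnj exp_minus mult_ac flip: of_real_mult)
qed

theorem theorem5:
  fixes n m :: nat and es :: "nat \<Rightarrow> gedge" and q :: real
  assumes edges_in: "\<And>e. e < m \<Longrightarrow> gedge_ends (es e) \<subseteq> {..<n}"
    and no_loops: "\<And>e. e < m \<Longrightarrow> card (gedge_ends (es e)) = 2"
    and simple: "\<And>e e'. e < m \<Longrightarrow> e' < m \<Longrightarrow> e \<noteq> e' \<Longrightarrow>
                   gedge_ends (es e) \<noteq> gedge_ends (es e')"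
  shows "\<forall>u<n. \<forall>v<n.
           sheaf_laplacian m 1 q (\<lambda>e. gedge_tail (es e)) (\<lambda>e. gedge_head (es e))
             (\<lambda>w e k i. case es e of Und _ _ \<Rightarrow> sqrt 2 | Dir _ _ \<Rightarrow> 1) (u, 0) (v, 0)
           = magnetic_laplacian n m es q u v"
proof -
  let ?F = "\<lambda>w e k i. case es e of Und _ _ \<Rightarrow> sqrt 2 | Dir _ _ \<Rightarrow> 1"
  have simple_graph: "inj_on (\<lambda>e. gedge_ends (es e)) {..<m}"
    using simple by (meson inj_onI lessThan_iff)
  have "sheaf_laplacian m 1 q (\<lambda>e. gedge_tail (es e)) (\<lambda>e. gedge_head (es e)) ?F (u, 0) (v, 0)
          = magnetic_laplacian n m es q u v" for u v
    by (subst sheaf_laplacian_sum_edges, subst magnetic_laplacian_sum_edges[OF simple_graph])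
      (intro sum.cong refl sheaf_laplacian_single_edge_eq_magnetic no_loops edges_in; simp)
  then show ?thesis by blast
qed

end
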